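(* Fix an integer $r\ge 4$. For every integer $n\ge 33$, there exists a $K_{1,r}$-free graph $G$ of order $n$ with no isolated vertices and $\chi(G)=2$ such that \[ f_o(G)<\frac{|V(G)|}{\chi(G)}=\frac{n}{2}. \] Specifically, writing $n=9k+4\ell$ with integers $k\ge 1$, $\ell\ge 0$, one may take $G=kF\cup \ell C_4$, where $F$ is the bipartite graph with vertex set $\{a,b,c,d,u,v,w,x,y\}$ and edge set $\{au,ax,ay,bv,bw,bx,cu,cv,cy,du,dw,dx\}$, and $f_o(G)=4k+2\ell$.
   Context: All graphs are finite and simple. An induced subgraph of a graph $G$ is called odd if every vertex of it has odd degree in it. $f_o(G)$ denotes the maximum order of an odd induced subgraph of $G$. A graph is $K_{1,r}$-free if it contains no induced subgraph isomorphic to $K_{1,r}$. $\chi(G)$ is the chromatic number. $kF\cup\ell C_4$ denotes the vertex-disjoint union of $k$ copies of $F$ and $\ell$ copies of the $4$-cycle $C_4$. *)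

theory Defs
  imports Complex_Main
begin

definition simple_graph :: "'a set \<Rightarrow> ('a \<Rightarrow> 'a \<Rightarrow> bool) \<Rightarrow> bool" where
  "simple_graph V E \<longleftrightarrow> finite V \<and> (\<forall>x y. E x y \<longrightarrow> x \<in> V \<and> y \<in> V)
     \<and> (\<forall>x y. E x y \<longrightarrow> E y x) \<and> (\<forall>x. \<not> E x x)"

definition odd_induced :: "'a set \<Rightarrow> ('a \<Rightarrow> 'a \<Rightarrow> bool) \<Rightarrow> 'a set \<Rightarrow> bool" where
  "odd_induced V E S \<longleftrightarrow> S \<subseteq> V \<and> (\<forall>v\<in>S. odd (card {u\<in>S. E v u}))"

definition f_o :: "'a set \<Rightarrow> ('a \<Rightarrow> 'a \<Rightarrow> bool) \<Rightarrow> nat" where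
  "f_o V E = Max {card S | S. odd_induced V E S}"

definition K1r_free :: "nat \<Rightarrow> 'a set \<Rightarrow> ('a \<Rightarrow> 'a \<Rightarrow> bool) \<Rightarrow> bool" where
  "K1r_free r V E \<longleftrightarrow> \<not> (\<exists>v\<in>V. \<exists>T. T \<subseteq> V \<and> v \<notin> T \<and> card T = r
      \<and> (\<forall>t\<in>T. E v t) \<and> (\<forall>s\<in>T. \<forall>t\<in>T. \<not> E s t))"

definition no_isolated :: "'a set \<Rightarrow> ('a \<Rightarrow> 'a \<Rightarrow> bool) \<Rightarrow> bool" where
  "no_isolated V E \<longleftrightarrow> (\<forall>v\<in>V. \<exists>u\<in>V. E v u)"

definition proper_colouring :: "'a set \<Rightarrow> ('a \<Rightarrow> 'a \<Rightarrow> bool) \<Rightarrow> nat \<Rightarrow> ('a \<Rightarrow> nat) \<Rightarrow> bool" where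
  "proper_colouring V E k c \<longleftrightarrow> (\<forall>v\<in>V. c v < k) \<and> (\<forall>u\<in>V. \<forall>v\<in>V. E u v \<longrightarrow> c u \<noteq> c v)"

definition chromatic_number :: "'a set \<Rightarrow> ('a \<Rightarrow> 'a \<Rightarrow> bool) \<Rightarrow> nat" where
  "chromatic_number V E = (LEAST k. \<exists>c. proper_colouring V E k c)"

text \<open>The graph F on {a,b,c,d,u,v,w,x,y}, encoded as a=0,b=1,c=2,d=3,u=4,v=5,w=6,x=7,y=8,
  with edges au,ax,ay,bv,bw,bx,cu,cv,cy,du,dw,dx.\<close>
definition F_edges :: "(nat \<times> nat) set" where
  "F_edges = {(0,4),(0,7),(0,8),(1,5),(1,6),(1,7),(2,4),(2,5),(2,8),(3,4),(3,6),(3,7)}"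

definition F_adj :: "nat \<Rightarrow> nat \<Rightarrow> bool" where
  "F_adj i j \<longleftrightarrow> (i, j) \<in> F_edges \<or> (j, i) \<in> F_edges"

definition C4_adj :: "nat \<Rightarrow> nat \<Rightarrow> bool" where
  "C4_adj i j \<longleftrightarrow> i < 4 \<and> j < 4 \<and> (j = (i + 1) mod 4 \<or> i = (j + 1) mod 4)"

text \<open>kF \<union> lC4: components indexed by i < k + l; component i < k is a copy of F
  (vertices (i,0..8)), component k \<le> i < k + l is a copy of C4 (vertices (i,0..3)).\<close>
definition kF_lC4_V :: "nat \<Rightarrow> nat \<Rightarrow> (nat \<times> nat) set" where
  "kF_lC4_V k l = {(i, j). i < k \<and> j < 9} \<union> {(i, j). k \<le> i \<and> i < k + l \<and> j < 4}"

definition kF_lC4_E :: "nat \<Rightarrow> nat \<Rightarrow> (nat \<times> nat) \<Rightarrow> (nat \<times> nat) \<Rightarrow> bool" where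
  "kF_lC4_E k l p q \<longleftrightarrow> fst p = fst q \<and> fst p < k + l \<and>
     (if fst p < k then F_adj (snd p) (snd q) else C4_adj (snd p) (snd q))"

end

theory Submission
  imports Defs "HOL-Library.Nat_Bijection"
begin

text \<open>
  Both F and C4 are bipartite with maximum degree at most 3 < r, and these properties pass to
  disjoint unions, over which f_o is additive. An exhaustive search through the 2^9 vertex
  subsets of F gives f_o(F) = 4, attained by {a, b, u, v}, while f_o(C4) = 2; hence
  f_o(kF \<union> lC4) = 4k + 2l < (9k + 4l)/2 as soon as k \<ge> 1. Every n \<ge> 33 is of the form
  9k + 4l with k \<ge> 1 since n - 9 exceeds 23, the Frobenius number of 4 and 9. As the
  existential claim asks for a graph on natural numbers, the construction is finally transported
  along the bijection prod_encode.
\<close>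

lemma finite_odd_induced_cards:
  assumes "finite V"
  shows "finite {card S | S. odd_induced V E S}"
proof -
  have "{card S | S. odd_induced V E S} \<subseteq> card ` Pow V"
    by (auto simp: odd_induced_def)
  then show ?thesis
    using assms by (rule finite_subset[OF _ finite_imageI[OF finite_Pow_iff[THEN iffD2]]])
qed

lemma card_le_f_o:
  assumes "finite V" and "odd_induced V E S"
  shows "card S \<le> f_o V E"
  unfolding f_o_def using assms finite_odd_induced_cards by (auto intro: Max_ge)

lemma f_o_attained:
  assumes "finite V"
  obtains S where "odd_induced V E S" and "card S = f_o V E"
proof -
  have "odd_induced V E {}"
    by (simp add: odd_induced_def)
  then have "f_o V E \<in> {card S | S. odd_induced V E S}"
    unfolding f_o_def using finite_odd_induced_cards[OF assms] by (intro Max_in) auto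
  then show ?thesis
    using that by auto
qed

lemma f_o_eqI:
  assumes "finite V" and "odd_induced V E S"
    and "\<And>T. odd_induced V E T \<Longrightarrow> card T \<le> card S"
  shows "f_o V E = card S"
  using assms card_le_f_o f_o_attained by (metis le_antisym)

lemma odd_induced_set_iff:
  assumes "distinct xs"
  shows "odd_induced V E (set xs) \<longleftrightarrow>
    set xs \<subseteq> V \<and> (\<forall>j\<in>set xs. odd (length (filter (E j) xs)))"
  using assms by (simp add: odd_induced_def distinct_length_filter Int_def conj_commute)

lemma f_o_set_eq_by_subseqs:
  assumes "distinct vs" and "distinct ws" and "set ws \<subseteq> set vs"
    and "\<forall>j\<in>set ws. odd (length (filter (E j) ws))"
    and "\<forall>xs\<in>set (subseqs vs). (\<forall>j\<in>set xs. odd (length (filter (E j) xs)))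
           \<longrightarrow> length xs \<le> length ws"
  shows "f_o (set vs) E = length ws"
proof -
  have "f_o (set vs) E = card (set ws)"
  proof (rule f_o_eqI)
    show "odd_induced (set vs) E (set ws)"
      using assms(2-4) odd_induced_set_iff by blast
    fix T assume T: "odd_induced (set vs) E T"
    then obtain xs where xs: "xs \<in> set (subseqs vs)" "set xs = T"
      using subset_subseqs[of T vs] by (auto simp: odd_induced_def)
    moreover have "distinct xs"
      using xs(1) assms(1) by (rule subseqs_distinctD)
    ultimately show "card T \<le> card (set ws)"
      using T assms(2,5) odd_induced_set_iff distinct_card by metis
  qed simp
  then show ?thesis
    using assms(2) by (simp add: distinct_card)
qed

lemma K1r_free_if_degree_less:
  assumes "finite V" and "\<And>v. v \<in> V \<Longrightarrow> card {u\<in>V. E v u} < r"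
  shows "K1r_free r V E"
  unfolding K1r_free_def
proof (intro notI, elim bexE exE conjE)
  fix v T assume "v \<in> V" "T \<subseteq> V" "card T = r" "\<forall>t\<in>T. E v t"
  then have "card T \<le> card {u\<in>V. E v u}"
    using assms(1) by (intro card_mono) auto
  then show False
    using assms(2) \<open>v \<in> V\<close> \<open>card T = r\<close> by (simp add: less_le_not_le)
qed

lemma chromatic_number_eq_2:
  assumes "proper_colouring V E 2 c" and "u \<in> V" "v \<in> V" "E u v"
  shows "chromatic_number V E = 2"
  unfolding chromatic_number_def
proof (rule Least_equality)
  show "\<exists>c. proper_colouring V E 2 c"
    using assms(1) by blast
next
  fix k assume "\<exists>c. proper_colouring V E k c"
  then obtain c' where "c' u < k" "c' v < k" "c' u \<noteq> c' v"
    using assms(2-4) unfolding proper_colouring_def by blast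
  then show "2 \<le> k"
    by linarith
qed

section \<open>Disjoint unions of graphs\<close>

definition disjoint_union_adj ::
    "'i set \<Rightarrow> ('i \<Rightarrow> 'a \<Rightarrow> 'a \<Rightarrow> bool) \<Rightarrow> 'i \<times> 'a \<Rightarrow> 'i \<times> 'a \<Rightarrow> bool" where
  "disjoint_union_adj I E p q \<longleftrightarrow> fst p = fst q \<and> fst p \<in> I \<and> E (fst p) (snd p) (snd q)"

lemma disjoint_union_adj_Pair [simp]:
  "disjoint_union_adj I E (i, j) (i', j') \<longleftrightarrow> i' = i \<and> i \<in> I \<and> E i j j'"
  by (auto simp: disjoint_union_adj_def)

lemma simple_graph_disjoint_union:
  assumes "finite I" and "\<And>i. i \<in> I \<Longrightarrow> simple_graph (V i) (E i)"
  shows "simple_graph (Sigma I V) (disjoint_union_adj I E)"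
  using assms unfolding simple_graph_def disjoint_union_adj_def by auto

lemma card_disjoint_union_nbhd:
  assumes "i \<in> I"
  shows "card {q\<in>S. disjoint_union_adj I E (i, j) q} = card {j'\<in>S `` {i}. E i j j'}"
proof -
  have "{q\<in>S. disjoint_union_adj I E (i, j) q} = Pair i ` {j'\<in>S `` {i}. E i j j'}"
    using assms by (auto simp: disjoint_union_adj_def)
  then show ?thesis
    by (simp add: card_image inj_on_def)
qed

lemma K1r_free_disjoint_union:
  assumes "finite I" and "\<And>i. i \<in> I \<Longrightarrow> finite (V i)"
    and "\<And>i v. i \<in> I \<Longrightarrow> v \<in> V i \<Longrightarrow> card {u\<in>V i. E i v u} < r"
  shows "K1r_free r (Sigma I V) (disjoint_union_adj I E)"
proof (rule K1r_free_if_degree_less)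
  show "finite (Sigma I V)"
    using assms(1,2) by simp
  fix p assume "p \<in> Sigma I V"
  then obtain i j where "p = (i, j)" "i \<in> I" "j \<in> V i"
    by blast
  moreover have "Sigma I V `` {i} = V i"
    using \<open>i \<in> I\<close> by auto
  ultimately show "card {q\<in>Sigma I V. disjoint_union_adj I E p q} < r"
    using assms(3) card_disjoint_union_nbhd[of i I "Sigma I V" E j] by simp
qed

lemma no_isolated_disjoint_union:
  assumes "\<And>i. i \<in> I \<Longrightarrow> no_isolated (V i) (E i)"
  shows "no_isolated (Sigma I V) (disjoint_union_adj I E)"
  using assms unfolding no_isolated_def by fastforce

lemma proper_colouring_disjoint_union:
  assumes "\<And>i. i \<in> I \<Longrightarrow> proper_colouring (V i) (E i) m (c i)"
  shows "proper_colouring (Sigma I V) (disjoint_union_adj I E) m (\<lambda>p. c (fst p) (snd p))"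
  using assms unfolding proper_colouring_def by auto

lemma odd_induced_slice:
  assumes "odd_induced (Sigma I V) (disjoint_union_adj I E) S" and "i \<in> I"
  shows "odd_induced (V i) (E i) (S `` {i})"
  using assms card_disjoint_union_nbhd[OF \<open>i \<in> I\<close>, of S] unfolding odd_induced_def by auto

lemma odd_induced_Sigma:
  assumes "\<And>i. i \<in> I \<Longrightarrow> odd_induced (V i) (E i) (S i)"
  shows "odd_induced (Sigma I V) (disjoint_union_adj I E) (Sigma I S)"
proof -
  have "Sigma I S `` {i} = S i" if "i \<in> I" for i
    using that by auto
  then show ?thesis
    using assms card_disjoint_union_nbhd[of _ I "Sigma I S" E]
    unfolding odd_induced_def by auto
qed

lemma f_o_disjoint_union:
  assumes "finite I" and "\<And>i. i \<in> I \<Longrightarrow> finite (V i)"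
  shows "f_o (Sigma I V) (disjoint_union_adj I E) = (\<Sum>i\<in>I. f_o (V i) (E i))"
proof -
  have "\<forall>i\<in>I. \<exists>S. odd_induced (V i) (E i) S \<and> card S = f_o (V i) (E i)"
    using f_o_attained assms(2) by metis
  then obtain S
    where S: "\<And>i. i \<in> I \<Longrightarrow> odd_induced (V i) (E i) (S i) \<and> card (S i) = f_o (V i) (E i)"
    by metis
  have fin: "finite (Sigma I V)"
    using assms by simp
  have "finite (S i)" if "i \<in> I" for i
    using S[OF that] assms(2)[OF that] by (meson odd_induced_def rev_finite_subset)
  then have card_S: "card (Sigma I S) = (\<Sum>i\<in>I. f_o (V i) (E i))"
    using S assms(1) by simp
  show ?thesis
    unfolding card_S[symmetric]
  proof (rule f_o_eqI[OF fin odd_induced_Sigma])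
    show "odd_induced (V i) (E i) (S i)" if "i \<in> I" for i
      using S that by blast
  next
    fix T assume T: "odd_induced (Sigma I V) (disjoint_union_adj I E) T"
    then have "T \<subseteq> Sigma I V"
      by (simp add: odd_induced_def)
    then have "T = Sigma I (\<lambda>i. T `` {i})" and "finite T"
      using fin by (auto intro: finite_subset)
    then have "card T = (\<Sum>i\<in>I. card (T `` {i}))"
      using assms(1) by (metis card_SigmaI finite_Image)
    also have "\<dots> \<le> (\<Sum>i\<in>I. f_o (V i) (E i))"
      using T assms(2) by (intro sum_mono card_le_f_o odd_induced_slice)
    finally show "card T \<le> card (Sigma I S)"
      using card_S by simp
  qed
qed

section \<open>Relabelling vertices\<close>

definition relabel_adj :: "('a \<Rightarrow> 'b) \<Rightarrow> ('a \<Rightarrow> 'a \<Rightarrow> bool) \<Rightarrow> 'b \<Rightarrow> 'b \<Rightarrow> bool" where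
  "relabel_adj h E x y \<longleftrightarrow> E (inv h x) (inv h y)"

context
  fixes h :: "'a \<Rightarrow> 'b"
  assumes bij: "bij h"
begin

lemma relabel_adj_image [simp]: "relabel_adj h E (h x) (h y) \<longleftrightarrow> E x y"
  using bij by (simp add: relabel_adj_def bij_is_inj)

lemma bij_preimageE:
  obtains x' where "x = h x'"
  using bij by (metis bij_def surjD)

lemma card_relabel: "card (h ` A) = card A"
  by (rule card_image[OF inj_on_subset[OF bij_is_inj[OF bij] subset_UNIV]])

lemma simple_graph_relabel:
  assumes "simple_graph V E"
  shows "simple_graph (h ` V) (relabel_adj h E)"
  unfolding simple_graph_def
proof (intro conjI allI impI)
  show "finite (h ` V)"
    using assms by (simp add: simple_graph_def)
  fix x y
  obtain x' y' where xy: "x = h x'" "y = h y'"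
    by (metis bij_preimageE)
  show "relabel_adj h E x y \<Longrightarrow> x \<in> h ` V" "relabel_adj h E x y \<Longrightarrow> y \<in> h ` V"
       "relabel_adj h E x y \<Longrightarrow> relabel_adj h E y x"
       "\<not> relabel_adj h E x x"
    using assms unfolding xy by (auto simp: simple_graph_def)
qed

lemma no_isolated_relabel:
  assumes "no_isolated V E"
  shows "no_isolated (h ` V) (relabel_adj h E)"
  using assms unfolding no_isolated_def by auto

lemma K1r_free_relabel:
  assumes "K1r_free r V E"
  shows "K1r_free r (h ` V) (relabel_adj h E)"
  unfolding K1r_free_def
proof (intro notI, elim bexE exE conjE)
  fix v T assume "v \<in> h ` V" "T \<subseteq> h ` V" "v \<notin> T" "card T = r"
    "\<forall>t\<in>T. relabel_adj h E v t" "\<forall>s\<in>T. \<forall>t\<in>T. \<not> relabel_adj h E s t"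
  moreover obtain v' T' where "v = h v'" "T = h ` T'"
    using \<open>T \<subseteq> h ` V\<close> \<open>v \<in> h ` V\<close> by (auto simp: subset_image_iff)
  ultimately have "v' \<in> V \<and> T' \<subseteq> V \<and> v' \<notin> T' \<and> card T' = r
      \<and> (\<forall>t\<in>T'. E v' t) \<and> (\<forall>s\<in>T'. \<forall>t\<in>T'. \<not> E s t)"
    using bij by (auto simp: card_relabel bij_is_inj inj_image_mem_iff inj_image_subset_iff)
  then show False
    using assms unfolding K1r_free_def by blast
qed

lemma chromatic_number_relabel:
  "chromatic_number (h ` V) (relabel_adj h E) = chromatic_number V E"
proof -
  have colouring_iff:
    "proper_colouring (h ` V) (relabel_adj h E) k c \<longleftrightarrow> proper_colouring V E k (c \<circ> h)" for k c
    unfolding proper_colouring_def by simp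
  have "(\<exists>c. proper_colouring (h ` V) (relabel_adj h E) k c) \<longleftrightarrow> (\<exists>c. proper_colouring V E k c)"
    for k
    unfolding colouring_iff
    by (metis bij bij_inv_eq_iff comp_apply ext)
  then show ?thesis
    unfolding chromatic_number_def by simp
qed

lemma odd_induced_relabel:
  "odd_induced (h ` V) (relabel_adj h E) (h ` S) \<longleftrightarrow> odd_induced V E S"
proof -
  have "{u\<in>h ` S. relabel_adj h E (h v) u} = h ` {u\<in>S. E v u}" for v
    by auto
  then show ?thesis
    using bij by (simp add: odd_induced_def card_relabel bij_is_inj inj_image_subset_iff)
qed

lemma f_o_relabel: "f_o (h ` V) (relabel_adj h E) = f_o V E"
proof -
  have "{card T | T. odd_induced (h ` V) (relabel_adj h E) T} = {card S | S. odd_induced V E S}"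
  proof (intro set_eqI iffI; elim CollectE exE conjE)
    fix n T assume "n = card T" "odd_induced (h ` V) (relabel_adj h E) T"
    moreover obtain S where "T = h ` S"
      using calculation(2) by (auto simp: odd_induced_def subset_image_iff)
    ultimately show "n \<in> {card S | S. odd_induced V E S}"
      by (auto simp: odd_induced_relabel card_relabel)
  next
    fix n S assume "n = card S" "odd_induced V E S"
    then show "n \<in> {card T | T. odd_induced (h ` V) (relabel_adj h E) T}"
      by (metis (mono_tags, lifting) card_relabel mem_Collect_eq odd_induced_relabel)
  qed
  then show ?thesis
    unfolding f_o_def by simp
qed

end

section \<open>The graphs F and C4\<close>

text \<open>Adjacency lists of F: the exhaustive searches below evaluate much faster on these than
  on the edge set F_edges.\<close>
definition F_neighbours :: "nat list list" where
  "F_neighbours = [[4, 7, 8], [5, 6, 7], [4, 5, 8], [4, 6, 7], [0, 2, 3], [1, 2], [1, 3], [0, 1, 3], [0, 2]]"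

lemma F_adj_iff_neighbours: "F_adj i j \<longleftrightarrow> i < 9 \<and> j \<in> set (F_neighbours ! i)"
proof (cases "i < 9")
  case True
  then have "i = 0 \<or> i = 1 \<or> i = 2 \<or> i = 3 \<or> i = 4 \<or> i = 5 \<or> i = 6 \<or> i = 7 \<or> i = 8"
    by linarith
  then show ?thesis
    by (elim disjE) (auto simp: F_adj_def F_edges_def F_neighbours_def)
qed (auto simp: F_adj_def F_edges_def)

lemma simple_graph_F: "simple_graph {..<9} F_adj"
  by (auto simp: simple_graph_def F_adj_def F_edges_def)

lemma simple_graph_C4: "simple_graph {..<4} C4_adj"
  unfolding simple_graph_def C4_adj_def by (auto simp: mod_Suc)

lemma degree_F_le: "card {u\<in>{..<9}. F_adj v u} \<le> 3"
proof -
  have "\<forall>v\<in>set [0..<9]. length (filter (F_adj v) [0..<9]) \<le> 3"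
    unfolding F_adj_iff_neighbours[abs_def] F_neighbours_def by code_simp
  then show ?thesis
    by (cases "v < 9") (auto simp: distinct_length_filter atLeast_upt Int_def conj_commute F_adj_iff_neighbours)
qed

lemma degree_C4_le: "card {u\<in>{..<4}. C4_adj v u} \<le> 3"
proof -
  have "\<forall>v\<in>set [0..<4]. length (filter (C4_adj v) [0..<4]) \<le> 3"
    unfolding C4_adj_def by code_simp
  then show ?thesis
    by (cases "v < 4") (auto simp: distinct_length_filter atLeast_upt Int_def conj_commute C4_adj_def)
qed

lemma no_isolated_F: "no_isolated {..<9} F_adj"
  unfolding no_isolated_def atLeast_upt F_adj_def F_edges_def by code_simp

lemma no_isolated_C4: "no_isolated {..<4} C4_adj"
  unfolding no_isolated_def atLeast_upt C4_adj_def by code_simp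

lemma proper_colouring_F: "proper_colouring {..<9} F_adj 2 (\<lambda>j. if j < 4 then 0 else 1)"
  by (auto simp: proper_colouring_def F_adj_def F_edges_def)

lemma proper_colouring_C4: "proper_colouring {..<4} C4_adj 2 (\<lambda>j. j mod 2)"
  unfolding proper_colouring_def atLeast_upt C4_adj_def by code_simp

lemma f_o_F: "f_o {..<9} F_adj = 4"
proof -
  have "f_o (set [0..<9]) F_adj = length [0, 1, 4, 5 :: nat]"
  proof (rule f_o_set_eq_by_subseqs)
    show "\<forall>xs\<in>set (subseqs [0..<9]). (\<forall>j\<in>set xs. odd (length (filter (F_adj j) xs)))
        \<longrightarrow> length xs \<le> length [0, 1, 4, 5 :: nat]"
      unfolding F_adj_iff_neighbours[abs_def] F_neighbours_def by code_simp
  qed (auto simp: F_adj_def F_edges_def)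
  then show ?thesis
    unfolding atLeast_upt by simp
qed

lemma f_o_C4: "f_o {..<4} C4_adj = 2"
proof -
  have "f_o (set [0..<4]) C4_adj = length [0, 1 :: nat]"
  proof (rule f_o_set_eq_by_subseqs)
    show "\<forall>xs\<in>set (subseqs [0..<4]). (\<forall>j\<in>set xs. odd (length (filter (C4_adj j) xs)))
        \<longrightarrow> length xs \<le> length [0, 1 :: nat]"
      unfolding C4_adj_def by code_simp
  qed (auto simp: C4_adj_def)
  then show ?thesis
    unfolding atLeast_upt by simp
qed

definition kF_lC4_component_V :: "nat \<Rightarrow> nat \<Rightarrow> nat set" where
  "kF_lC4_component_V k i = (if i < k then {..<9} else {..<4})"

definition kF_lC4_component_E :: "nat \<Rightarrow> nat \<Rightarrow> nat \<Rightarrow> nat \<Rightarrow> bool" where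
  "kF_lC4_component_E k i = (if i < k then F_adj else C4_adj)"

lemma kF_lC4_V_eq_Sigma: "kF_lC4_V k l = Sigma {..<k + l} (kF_lC4_component_V k)"
  by (auto simp: kF_lC4_V_def kF_lC4_component_V_def split: if_splits)

lemma kF_lC4_E_eq_disjoint_union: "kF_lC4_E k l = disjoint_union_adj {..<k + l} (kF_lC4_component_E k)"
  by (auto simp: kF_lC4_E_def disjoint_union_adj_def kF_lC4_component_E_def fun_eq_iff)

lemma sum_lessThan_if_less: "(\<Sum>i<k + l. if i < k then a else b) = k * a + l * (b :: nat)"
  by (induction l) auto

lemma simple_graph_kF_lC4: "simple_graph (kF_lC4_V k l) (kF_lC4_E k l)"
  unfolding kF_lC4_V_eq_Sigma kF_lC4_E_eq_disjoint_union
  by (rule simple_graph_disjoint_union)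
    (simp_all add: kF_lC4_component_V_def kF_lC4_component_E_def simple_graph_F simple_graph_C4)

lemma card_kF_lC4_V: "card (kF_lC4_V k l) = 9 * k + 4 * l"
proof -
  have "card (kF_lC4_V k l) = (\<Sum>i<k + l. if i < k then 9 else 4)"
    unfolding kF_lC4_V_eq_Sigma by (simp add: kF_lC4_component_V_def if_distrib cong: if_cong)
  then show ?thesis
    by (simp add: sum_lessThan_if_less)
qed

lemma K1r_free_kF_lC4:
  assumes "r \<ge> 4"
  shows "K1r_free r (kF_lC4_V k l) (kF_lC4_E k l)"
  unfolding kF_lC4_V_eq_Sigma kF_lC4_E_eq_disjoint_union
proof (rule K1r_free_disjoint_union)
  fix i v assume "v \<in> kF_lC4_component_V k i"
  then have "card {u \<in> kF_lC4_component_V k i. kF_lC4_component_E k i v u} \<le> 3"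
    using degree_F_le degree_C4_le
    by (cases "i < k") (simp_all add: kF_lC4_component_V_def kF_lC4_component_E_def)
  then show "card {u \<in> kF_lC4_component_V k i. kF_lC4_component_E k i v u} < r"
    using assms by simp
qed (simp_all add: kF_lC4_component_V_def)

lemma no_isolated_kF_lC4: "no_isolated (kF_lC4_V k l) (kF_lC4_E k l)"
  unfolding kF_lC4_V_eq_Sigma kF_lC4_E_eq_disjoint_union
  by (rule no_isolated_disjoint_union)
    (simp add: kF_lC4_component_V_def kF_lC4_component_E_def no_isolated_F no_isolated_C4)

lemma chromatic_number_kF_lC4:
  assumes "k \<ge> 1"
  shows "chromatic_number (kF_lC4_V k l) (kF_lC4_E k l) = 2"
proof (rule chromatic_number_eq_2)
  let ?c = "\<lambda>i j. if i < k then if j < 4 then 0 else 1 else j mod 2 :: nat"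
  show "proper_colouring (kF_lC4_V k l) (kF_lC4_E k l) 2 (\<lambda>p. ?c (fst p) (snd p))"
    unfolding kF_lC4_V_eq_Sigma kF_lC4_E_eq_disjoint_union
    by (rule proper_colouring_disjoint_union)
      (simp add: kF_lC4_component_V_def kF_lC4_component_E_def proper_colouring_F proper_colouring_C4)
  show "(0, 0) \<in> kF_lC4_V k l" "(0, 4) \<in> kF_lC4_V k l" "kF_lC4_E k l (0, 0) (0, 4)"
    using assms by (simp_all add: kF_lC4_V_def kF_lC4_E_def F_adj_def F_edges_def)
qed

lemma f_o_kF_lC4: "f_o (kF_lC4_V k l) (kF_lC4_E k l) = 4 * k + 2 * l"
proof -
  have "f_o (kF_lC4_V k l) (kF_lC4_E k l) = (\<Sum>i<k + l. if i < k then 4 else 2)"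
    unfolding kF_lC4_V_eq_Sigma kF_lC4_E_eq_disjoint_union
    by (subst f_o_disjoint_union)
      (simp_all add: kF_lC4_component_V_def kF_lC4_component_E_def if_distrib f_o_F f_o_C4 cong: if_cong)
  then show ?thesis
    by (simp add: sum_lessThan_if_less)
qed

theorem theorem2p6:
  fixes r n :: nat
  assumes "r \<ge> 4" and "n \<ge> 33"
  shows "(\<exists>V :: nat set. \<exists>E. simple_graph V E \<and> card V = n \<and> K1r_free r V E
            \<and> no_isolated V E \<and> chromatic_number V E = 2
            \<and> real (f_o V E) < real (card V) / real (chromatic_number V E))
       \<and> (\<exists>k l. k \<ge> 1 \<and> n = 9 * k + 4 * l)
       \<and> (\<forall>k l. k \<ge> 1 \<longrightarrow> n = 9 * k + 4 * l \<longrightarrow>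
            (let V = kF_lC4_V k l; E = kF_lC4_E k l in
              simple_graph V E \<and> card V = n \<and> K1r_free r V E
              \<and> no_isolated V E \<and> chromatic_number V E = 2
              \<and> f_o V E = 4 * k + 2 * l
              \<and> real (f_o V E) < real (card V) / real (chromatic_number V E)))"
proof -
  note kF_lC4 = simple_graph_kF_lC4 card_kF_lC4_V K1r_free_kF_lC4 no_isolated_kF_lC4
    chromatic_number_kF_lC4 f_o_kF_lC4
  have "\<exists>k l. k \<ge> 1 \<and> n = 9 * k + 4 * l"
    using assms(2) by presburger
  then obtain k l where kl: "k \<ge> 1" "n = 9 * k + 4 * l"
    by blast
  let ?V = "prod_encode ` kF_lC4_V k l" and ?E = "relabel_adj prod_encode (kF_lC4_E k l)"
  have "simple_graph ?V ?E \<and> card ?V = n \<and> K1r_free r ?V ?E \<and> no_isolated ?V ?E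
      \<and> chromatic_number ?V ?E = 2
      \<and> real (f_o ?V ?E) < real (card ?V) / real (chromatic_number ?V ?E)"
    using kl assms(1) bij_prod_encode
    by (simp add: kF_lC4 simple_graph_relabel card_relabel K1r_free_relabel
        no_isolated_relabel chromatic_number_relabel f_o_relabel)
  then show ?thesis
    using kl assms(1) by (auto simp: Let_def kF_lC4)
qed

end
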